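(* For all $n\ge 1$ and $0\le k\le \lfloor n/2\rfloor$, $$W(n+1,k)=2^{n-k}S(n,k).$$ Moreover, for $n\ge 1$, $$S_n(x)=\frac{1}{2^{n+1}x}\sum_{k=0}^{\lfloor n/2\rfloor+1}p(n+1,n-2k+2)\,(2x-1)^k,$$ where for positive integers $m$ and integers $k$ we set $$p(m,m-2k+1)=(-1)^{k}\sum_{i\ge 1} i!\,{m\brace i}\,(-2)^{m-i}\left[\binom{i}{m-2k}-\binom{i}{m-2k+1}\right],$$ with ${m\brace i}$ the Stirling numbers of the second kind.
   Context: For a permutation $\pi=\pi(1)\cdots\pi(n)$ of $[n]=\{1,\dots,n\}$, a descent is an index $i\in[n-1]$ with $\pi(i)>\pi(i+1)$, and ${\rm des}(\pi)$ is the number of descents. A double descent is an index $i\in[n-2]$ with $\pi(i)>\pi(i+1)>\pi(i+2)$. The permutation $\pi$ is simsun if for every $k\in[n]$, the subword of $\pi$ consisting of the letters in $[k]$ (in the order they appear in $\pi$) has no double descents. Let $\mathcal{RS}_n$ be the set of simsun permutations of $[n]$, $S(n,k)=\#\{\pi\in\mathcal{RS}_n:{\rm des}(\pi)=k\}$ and $S_n(x)=\sum_k S(n,k)x^k$. An interior peak of $\pi\in\mathfrak S_n$ is an index $i\in\{2,\dots,n-1\}$ with $\pi(i-1)<\pi(i)>\pi(i+1)$; $W(n,k)$ denotes the number of permutations in $\mathfrak S_n$ with exactly $k$ interior peaks. *)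

theory Defs
  imports Complex_Main "HOL-Combinatorics.Stirling"
begin

text \<open>Permutations of [n] in one-line notation, as lists (0-based positions).\<close>
definition perms :: "nat \<Rightarrow> nat list set" where
  "perms n = {xs. distinct xs \<and> set xs = {1..n}}"

definition des :: "nat list \<Rightarrow> nat" where
  "des xs = card {i. Suc i < length xs \<and> xs ! i > xs ! Suc i}"

definition has_double_descent :: "nat list \<Rightarrow> bool" where
  "has_double_descent xs \<longleftrightarrow>
     (\<exists>i. i + 2 < length xs \<and> xs ! i > xs ! (i+1) \<and> xs ! (i+1) > xs ! (i+2))"

definition simsun :: "nat list \<Rightarrow> bool" where
  "simsun xs \<longleftrightarrow>
     (\<forall>k \<in> {1..length xs}. \<not> has_double_descent (filter (\<lambda>x. x \<le> k) xs))"

definition RS :: "nat \<Rightarrow> nat list set" where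
  "RS n = {xs \<in> perms n. simsun xs}"

definition S :: "nat \<Rightarrow> nat \<Rightarrow> nat" where
  "S n k = card {xs \<in> RS n. des xs = k}"

definition S_poly :: "nat \<Rightarrow> real \<Rightarrow> real" where
  "S_poly n x = (\<Sum>k\<le>n. real (S n k) * x ^ k)"

text \<open>Interior peaks: 1-based index i in {2..n-1} is 0-based index j in {1..n-2}.\<close>
definition ipk :: "nat list \<Rightarrow> nat" where
  "ipk xs = card {j. 0 < j \<and> Suc j < length xs \<and> xs ! (j-1) < xs ! j \<and> xs ! j > xs ! Suc j}"

definition W :: "nat \<Rightarrow> nat \<Rightarrow> nat" where
  "W n k = card {xs \<in> perms n. ipk xs = k}"

definition ibinom :: "nat \<Rightarrow> int \<Rightarrow> int" where
  "ibinom i j = (if j < 0 then 0 else int (i choose nat j))"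

text \<open>p_coef m k = p(m, m-2k+1).  The sum over i \<ge> 1 is finite: Stirling m i = 0 for i > m.\<close>
definition p_coef :: "nat \<Rightarrow> int \<Rightarrow> int" where
  "p_coef m k = (-1) ^ nat \<bar>k\<bar> * (\<Sum>i=1..m. int (fact i) * int (Stirling m i) * (-2) ^ (m - i)
        * (ibinom i (int m - 2*k) - ibinom i (int m - 2*k + 1)))"

end

theory Submission
  imports Defs "HOL-Computational_Algebra.Polynomial"
begin

text \<open>
  Every permutation of [n+1] arises exactly once by inserting n+1 into one of the n+1 gaps of
  a permutation of [n]. Placed into a list without double descents, the maximum creates a
  double descent exactly when it goes immediately before a descent, and it adds a descent
  unless it goes to the end or into a descent; if the list is simsun, the new list is simsun
  iff it has no double descent. So a simsun permutation with d descents has d + 1 admissible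
  gaps keeping d descents and n - 2d gaps producing d + 1. Likewise a permutation of [n] with
  p interior peaks has 2p + 2 gaps (the two ends and both sides of each peak) keeping p peaks
  and n - 1 - 2p gaps producing p + 1. The resulting recurrences
  S(n+1,k) = (k+1) S(n,k) + (n-2k+2) S(n,k-1) and W(n+1,k) = (2k+2) W(n,k) + (n-2k+1) W(n,k-1)
  give 2^k W(n+1,k) = 2^n S(n,k) by induction.

  In polynomial form the first recurrence reads S_(n+1) = (1 + n x) S_n + x (1 - 2x) S_n'.
  The Fubini polynomials satisfy a first order differential recurrence too; after rescaling,
  the substitution x := x + 1 and multiplication by x - 1 it becomes
  H_m = ((x^2 - 1) D)^m (x - 1), and the coefficients of H_m are the inner sums defining
  p(m, _). Reading the coefficients of H_(n+1) of the parity of n downwards from degree n + 2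
  with alternating signs gives Q_n(y) = sum_k p(n+1, n-2k+2) y^k, and the operator
  (x^2 - 1) D turns into Q_(n+1) = (1 + y) ((n + 2) Q_n - 2 y Q_n'). Under y = 2x - 1 this is
  the recurrence satisfied by 2^(n+1) x S_n(x), so the two agree by induction.
\<close>

section \<open>Inserting an entry into a list\<close>

definition ins_at :: "nat \<Rightarrow> 'a \<Rightarrow> 'a list \<Rightarrow> 'a list" where
  "ins_at g x xs = take g xs @ x # drop g xs"

lemma length_ins_at [simp]: "length (ins_at g x xs) = Suc (length xs)"
  by (simp add: ins_at_def)

lemma set_ins_at [simp]: "set (ins_at g x xs) = insert x (set xs)"
  by (metis ins_at_def append_take_drop_id list.set(2) set_append Un_insert_right)

lemma distinct_ins_at: "distinct xs \<Longrightarrow> x \<notin> set xs \<Longrightarrow> distinct (ins_at g x xs)"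
proof -
  assume "distinct xs" "x \<notin> set xs"
  then have "distinct (take g xs @ drop g xs)" "x \<notin> set (take g xs)" "x \<notin> set (drop g xs)"
    by (auto dest: in_set_takeD in_set_dropD)
  then show ?thesis unfolding ins_at_def by (simp del: append_take_drop_id)
qed

lemma ins_at_length_append [simp]: "ins_at (length xs) x (xs @ ys) = xs @ x # ys"
  by (simp add: ins_at_def)

lemma filter_ins_at: "\<not> P x \<Longrightarrow> filter P (ins_at g x xs) = filter P xs"
  unfolding ins_at_def by (metis append_take_drop_id filter.simps(2) filter_append)

lemma drop_eq_nth_Cons_nth_Cons:
  "Suc g < length xs \<Longrightarrow> drop g xs = xs ! g # xs ! Suc g # drop (Suc (Suc g)) xs"
  by (metis Cons_nth_drop_Suc Suc_lessD)

lemma last_take_conv_nth: "0 < g \<Longrightarrow> g \<le> length xs \<Longrightarrow> last (take g xs) = xs ! (g - 1)"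
  by (cases "take g xs = []") (auto simp: last_conv_nth)

section \<open>Descents and double descents\<close>

definition descents :: "nat list \<Rightarrow> nat set" where
  "descents xs = {i. Suc i < length xs \<and> xs ! Suc i < xs ! i}"

lemma des_eq_card_descents: "des xs = card (descents xs)"
  by (simp add: des_def descents_def)

lemma descents_subset: "descents xs \<subseteq> {..<length xs}"
  and Suc_descents_subset: "Suc ` descents xs \<subseteq> {..<length xs}"
  by (auto simp: descents_def)

lemma finite_descents [simp]: "finite (descents xs)"
  using descents_subset finite_subset by blast

lemma des_Nil [simp]: "des [] = 0"
  and des_singleton [simp]: "des [a] = 0"
  by (simp_all add: des_def)

lemma des_Cons_Cons: "des (a # b # xs) = (if b < a then 1 else 0) + des (b # xs)"
proof -
  have "descents (a # b # xs) = {i. i = 0 \<and> b < a} \<union> Suc ` descents (b # xs)"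
  proof (intro set_eqI iffI)
    fix i assume "i \<in> descents (a # b # xs)"
    then show "i \<in> {i. i = 0 \<and> b < a} \<union> Suc ` descents (b # xs)"
      by (cases i) (auto simp: descents_def)
  qed (auto simp: descents_def)
  then show ?thesis
    by (simp add: des_eq_card_descents card_Un_disjoint card_image)
qed

lemma des_append:
  "des (xs @ ys) = des xs + des ys + (if xs \<noteq> [] \<and> ys \<noteq> [] \<and> hd ys < last xs then 1 else 0)"
proof (induction xs rule: induct_list012)
  case (2 a)
  then show ?case by (cases ys) (auto simp: des_Cons_Cons)
qed (auto simp: des_Cons_Cons)

lemma des_Cons_max:
  "\<forall>y\<in>set ys. y < M \<Longrightarrow> des (M # ys) = des ys + (if ys = [] then 0 else 1)"
  by (cases ys) (auto simp: des_Cons_Cons)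

lemma des_ins_at_max:
  assumes "\<forall>x\<in>set xs. x < M" "g \<le> length xs"
  shows "des (ins_at g M xs) + (if g \<in> Suc ` descents xs then 1 else 0)
    = des xs + (if g < length xs then 1 else 0)"
proof -
  have junction: "take g xs \<noteq> [] \<and> drop g xs \<noteq> [] \<and> hd (drop g xs) < last (take g xs)
      \<longleftrightarrow> g \<in> Suc ` descents xs"
  proof (cases g)
    case (Suc i)
    show ?thesis
    proof (cases "g < length xs")
      case True
      then have "hd (drop g xs) = xs ! Suc i" "last (take g xs) = xs ! i"
        using Suc by (simp_all add: hd_drop_conv_nth last_take_conv_nth)
      then show ?thesis using True Suc by (auto simp: descents_def)
    next
      case False
      then show ?thesis using Suc assms(2) by (auto simp: descents_def)
    qed
  qed simp
  have take: "\<forall>x\<in>set (take g xs). x < M" and drop: "\<forall>x\<in>set (drop g xs). x < M"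
    using assms(1) by (auto dest: in_set_takeD in_set_dropD)
  have "des (ins_at g M xs) = des (take g xs) + des (M # drop g xs)"
  proof -
    have "\<not> M < last (take g xs)" if "take g xs \<noteq> []"
      using take that last_in_set not_less_iff_gr_or_eq by blast
    then show ?thesis unfolding ins_at_def des_append by auto
  qed
  also have "\<dots> = des (take g xs) + des (drop g xs) + (if g < length xs then 1 else 0)"
    using drop by (simp add: des_Cons_max)
  finally have "des (ins_at g M xs)
      = des (take g xs) + des (drop g xs) + (if g < length xs then 1 else 0)" .
  moreover have "des xs
      = des (take g xs) + des (drop g xs) + (if g \<in> Suc ` descents xs then 1 else 0)"
    using des_append[of "take g xs" "drop g xs"] unfolding junction by simp
  ultimately show ?thesis by simp
qed

lemma has_double_descent_short: "length xs < 3 \<Longrightarrow> \<not> has_double_descent xs"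
  by (auto simp: has_double_descent_def)

lemma has_double_descent_append_left:
  "has_double_descent xs \<Longrightarrow> has_double_descent (xs @ ys)"
  unfolding has_double_descent_def by (auto simp: nth_append)

lemma has_double_descent_append_right:
  "has_double_descent ys \<Longrightarrow> has_double_descent (xs @ ys)"
proof -
  assume "has_double_descent ys"
  then obtain i where "i + 2 < length ys" "ys ! (i + 1) < ys ! i" "ys ! (i + 2) < ys ! (i + 1)"
    by (auto simp: has_double_descent_def)
  then show ?thesis
    unfolding has_double_descent_def by (intro exI[of _ "length xs + i"]) (simp add: nth_append)
qed

lemma has_double_descent_Cons_Cons_Cons:
  "has_double_descent (a # b # c # xs) \<longleftrightarrow> c < b \<and> b < a \<or> has_double_descent (b # c # xs)"
proof
  assume "has_double_descent (a # b # c # xs)"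
  then obtain i where i: "i + 2 < length (a # b # c # xs)"
    "(a # b # c # xs) ! (i + 1) < (a # b # c # xs) ! i"
    "(a # b # c # xs) ! (i + 2) < (a # b # c # xs) ! (i + 1)"
    by (auto simp: has_double_descent_def)
  then show "c < b \<and> b < a \<or> has_double_descent (b # c # xs)"
    unfolding has_double_descent_def by (cases i) auto
next
  assume "c < b \<and> b < a \<or> has_double_descent (b # c # xs)"
  then show "has_double_descent (a # b # c # xs)"
  proof
    assume "c < b \<and> b < a"
    then show ?thesis unfolding has_double_descent_def by (intro exI[of _ 0]) auto
  next
    assume "has_double_descent (b # c # xs)"
    then show ?thesis by (metis append_Cons append_Nil has_double_descent_append_right)
  qed
qed

lemma has_double_descent_Cons_max:
  "\<forall>y\<in>set ys. y < M \<Longrightarrow>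
    has_double_descent (M # ys)
      \<longleftrightarrow> (\<exists>b c zs. ys = b # c # zs \<and> c < b) \<or> has_double_descent ys"
  by (cases ys rule: remdups_adj.cases)
    (auto simp: has_double_descent_Cons_Cons_Cons has_double_descent_short)

lemma has_double_descent_append_max:
  "\<forall>x\<in>set xs. x < M \<Longrightarrow>
    has_double_descent (xs @ M # ys) \<longleftrightarrow> has_double_descent xs \<or> has_double_descent (M # ys)"
proof (induction xs rule: induct_list012)
  case (2 a)
  then show ?case by (cases ys) (auto simp: has_double_descent_Cons_Cons_Cons has_double_descent_short)
next
  case (3 a b zs)
  then show ?case
    by (cases zs) (auto simp: has_double_descent_Cons_Cons_Cons has_double_descent_short)
qed (simp add: has_double_descent_short)

lemma has_double_descent_ins_at_max:
  assumes "\<forall>x\<in>set xs. x < M" "\<not> has_double_descent xs"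
  shows "has_double_descent (ins_at g M xs) \<longleftrightarrow> g \<in> descents xs"
proof -
  have "\<not> has_double_descent (take g xs)" "\<not> has_double_descent (drop g xs)"
    using assms(2) has_double_descent_append_left has_double_descent_append_right
    by (metis append_take_drop_id)+
  moreover have "\<forall>x\<in>set (take g xs). x < M" "\<forall>x\<in>set (drop g xs). x < M"
    using assms(1) by (auto dest: in_set_takeD in_set_dropD)
  ultimately have "has_double_descent (ins_at g M xs)
      \<longleftrightarrow> (\<exists>b c zs. drop g xs = b # c # zs \<and> c < b)"
    unfolding ins_at_def by (simp add: has_double_descent_append_max has_double_descent_Cons_max)
  also have "\<dots> \<longleftrightarrow> Suc g < length xs \<and> xs ! Suc g < xs ! g"
  proof
    assume "\<exists>b c zs. drop g xs = b # c # zs \<and> c < b"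
    then obtain b c zs where bc: "drop g xs = b # c # zs" "c < b" by blast
    have "length xs - g = Suc (Suc (length zs))"
      using arg_cong[OF bc(1), of length] by (simp only: length_drop length_Cons)
    then have "Suc g < length xs" by simp
    with bc show "Suc g < length xs \<and> xs ! Suc g < xs ! g"
      by (simp add: drop_eq_nth_Cons_nth_Cons)
  qed (auto simp: drop_eq_nth_Cons_nth_Cons)
  finally show ?thesis by (simp add: descents_def)
qed

lemma descents_Int_Suc_descents:
  "\<not> has_double_descent xs \<Longrightarrow> descents xs \<inter> Suc ` descents xs = {}"
  unfolding has_double_descent_def descents_def
  by (auto simp: Suc_lessD)

lemma card_descents_Un_Suc_descents:
  "\<not> has_double_descent xs \<Longrightarrow> card (descents xs \<union> Suc ` descents xs) = 2 * des xs"
  using descents_Int_Suc_descents by (simp add: card_Un_disjoint card_image des_eq_card_descents)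

lemma two_des_le_length:
  assumes "\<not> has_double_descent xs"
  shows "2 * des xs \<le> length xs"
proof -
  have "card (descents xs \<union> Suc ` descents xs) \<le> card {..<length xs}"
    by (intro card_mono) (use descents_subset Suc_descents_subset in auto)
  then show ?thesis
    using card_descents_Un_Suc_descents[OF assms] by simp
qed

section \<open>Interior peaks\<close>

definition peaks :: "nat list \<Rightarrow> nat set" where
  "peaks xs = {j. 0 < j \<and> Suc j < length xs \<and> xs ! (j - 1) < xs ! j \<and> xs ! Suc j < xs ! j}"

lemma ipk_eq_card_peaks: "ipk xs = card (peaks xs)"
  by (simp add: ipk_def peaks_def)

lemma peaks_subset: "peaks xs \<subseteq> {1..<length xs}"
  and Suc_peaks_subset: "Suc ` peaks xs \<subseteq> {1..<length xs}"
  by (auto simp: peaks_def)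

lemma finite_peaks [simp]: "finite (peaks xs)"
  using peaks_subset finite_subset by blast

lemma peaks_Int_Suc_peaks: "peaks xs \<inter> Suc ` peaks xs = {}"
  by (force simp: peaks_def)

lemma card_peaks_Un_Suc_peaks: "card (peaks xs \<union> Suc ` peaks xs) = 2 * ipk xs"
  using peaks_Int_Suc_peaks by (simp add: card_Un_disjoint card_image ipk_eq_card_peaks)

lemma ipk_short: "length xs < 3 \<Longrightarrow> ipk xs = 0"
proof -
  assume "length xs < 3"
  then have "peaks xs = {}" by (auto simp: peaks_def)
  then show ?thesis by (simp add: ipk_eq_card_peaks)
qed

lemma ipk_Cons_Cons_Cons:
  "ipk (a # b # c # xs) = (if a < b \<and> c < b then 1 else 0) + ipk (b # c # xs)"
proof -
  have "peaks (a # b # c # xs) = {j. j = 1 \<and> a < b \<and> c < b} \<union> Suc ` peaks (b # c # xs)"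
  proof (intro set_eqI iffI)
    fix j assume j: "j \<in> peaks (a # b # c # xs)"
    then obtain i where "j = Suc i" by (auto simp: peaks_def gr0_conv_Suc)
    with j show "j \<in> {j. j = 1 \<and> a < b \<and> c < b} \<union> Suc ` peaks (b # c # xs)"
      by (cases i) (auto simp: peaks_def image_iff)
  qed (auto simp: peaks_def nth_Cons split: nat.splits)
  moreover have "1 \<notin> Suc ` peaks (b # c # xs)"
    by (auto simp: peaks_def)
  ultimately show ?thesis
    by (cases "a < b \<and> c < b") (simp_all add: ipk_eq_card_peaks card_image)
qed

lemma ipk_Cons_max: "\<forall>y\<in>set ys. y < M \<Longrightarrow> ipk (M # ys) = ipk ys"
  by (cases ys rule: remdups_adj.cases) (auto simp: ipk_short ipk_Cons_Cons_Cons)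

lemma ipk_append_max:
  assumes "\<forall>x\<in>set xs. x < M" "\<forall>y\<in>set ys. y < M"
  shows "ipk (xs @ M # ys) = ipk xs + ipk ys + (if xs \<noteq> [] \<and> ys \<noteq> [] then 1 else 0)"
  using assms
proof (induction xs rule: induct_list012)
  case 1
  then show ?case by (simp add: ipk_Cons_max ipk_short)
next
  case (2 a)
  then show ?case by (cases ys) (auto simp: ipk_short ipk_Cons_Cons_Cons ipk_Cons_max)
next
  case (3 a b zs)
  then show ?case by (cases zs) (auto simp: ipk_short ipk_Cons_Cons_Cons)
qed

lemma ipk_append: "ipk (xs @ ys) = ipk xs + ipk ys
   + (if 2 \<le> length xs \<and> ys \<noteq> [] \<and> xs ! (length xs - 2) < last xs \<and> hd ys < last xs then 1 else 0)
   + (if xs \<noteq> [] \<and> 2 \<le> length ys \<and> last xs < hd ys \<and> ys ! 1 < hd ys then 1 else 0)"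
proof (induction xs rule: induct_list012)
  case (2 a)
  then show ?case by (cases ys rule: remdups_adj.cases) (auto simp: ipk_short ipk_Cons_Cons_Cons)
next
  case (3 a b zs)
  show ?case
  proof (cases zs)
    case Nil
    then show ?thesis using 3 by (cases ys) (auto simp: ipk_short ipk_Cons_Cons_Cons)
  next
    case (Cons c zs')
    have "(a # b # zs) ! (length (a # b # zs) - 2) = (b # zs) ! (length (b # zs) - 2)"
      using Cons by simp
    then show ?thesis using 3 Cons by (auto simp: ipk_Cons_Cons_Cons)
  qed
qed (simp add: ipk_short)

lemma ipk_ins_at_max:
  assumes "\<forall>x\<in>set xs. x < M" "g \<le> length xs"
  shows "ipk (ins_at g M xs) + (if g \<in> peaks xs \<union> Suc ` peaks xs then 1 else 0)
    = ipk xs + (if 0 < g \<and> g < length xs then 1 else 0)"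
proof -
  let ?l = "take g xs" and ?r = "drop g xs"
  have left: "2 \<le> length ?l \<and> ?r \<noteq> [] \<and> ?l ! (length ?l - 2) < last ?l \<and> hd ?r < last ?l
      \<longleftrightarrow> g \<in> Suc ` peaks xs"
  proof (cases "2 \<le> g \<and> g < length xs")
    case True
    then have "length ?l = g" "?l ! (g - 2) = xs ! (g - 2)" "last ?l = xs ! (g - 1)" "hd ?r = xs ! g"
      by (simp_all add: last_take_conv_nth hd_drop_conv_nth)
    moreover have "g \<in> Suc ` peaks xs \<longleftrightarrow> g - 1 \<in> peaks xs"
      using True by (cases g) auto
    moreover have "g - 1 - 1 = g - 2" "Suc (g - 1) = g"
      using True by simp_all
    ultimately show ?thesis
      using True by (simp add: peaks_def)
  next
    case False
    then show ?thesis using assms(2) by (auto simp: peaks_def)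
  qed
  have right: "?l \<noteq> [] \<and> 2 \<le> length ?r \<and> last ?l < hd ?r \<and> ?r ! 1 < hd ?r
      \<longleftrightarrow> g \<in> peaks xs"
  proof (cases "0 < g \<and> Suc g < length xs")
    case True
    then have "last ?l = xs ! (g - 1)" "hd ?r = xs ! g" "?r ! 1 = xs ! Suc g"
      by (simp_all add: last_take_conv_nth hd_drop_conv_nth)
    then show ?thesis using True by (auto simp: peaks_def)
  next
    case False
    then show ?thesis using assms(2) by (auto simp: peaks_def)
  qed
  have "\<forall>x\<in>set ?l. x < M" "\<forall>x\<in>set ?r. x < M"
    using assms(1) by (auto dest: in_set_takeD in_set_dropD)
  then have "ipk (ins_at g M xs) = ipk ?l + ipk ?r + (if 0 < g \<and> g < length xs then 1 else 0)"
    using assms(2) unfolding ins_at_def by (auto simp: ipk_append_max)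
  moreover have "ipk xs = ipk ?l + ipk ?r
      + (if g \<in> Suc ` peaks xs then 1 else 0) + (if g \<in> peaks xs then 1 else 0)"
    using ipk_append[of ?l ?r] unfolding left right by simp
  ultimately show ?thesis
    using peaks_Int_Suc_peaks[of xs] by auto
qed

section \<open>Recurrences for S and W\<close>

lemma card_level_set_plus_indicator:
  assumes "finite F" "C \<subseteq> F" "\<And>g. g \<in> F \<Longrightarrow> f g = s + (if g \<in> C then 1 else 0)"
  shows "card {g \<in> F. f g = k} = (if k = s then card F - card C else if k = Suc s then card C else 0)"
proof -
  have "{g \<in> F. f g = k} = (if k = s then F - C else if k = Suc s then C else {})"
  proof (intro set_eqI)
    fix g
    show "g \<in> {g \<in> F. f g = k} \<longleftrightarrow> g \<in> (if k = s then F - C else if k = Suc s then C else {})"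
      using assms(2) assms(3)[of g] by (cases "g \<in> C") auto
  qed
  moreover have "card (F - C) = card F - card C"
    using assms(1,2) by (meson card_Diff_subset finite_subset)
  ultimately show ?thesis by simp
qed

lemma sum_by_level_and_predecessor:
  fixes a b :: "nat \<Rightarrow> nat"
  assumes "finite A"
  shows "(\<Sum>x\<in>A. if k = s x then a (s x) else if k = Suc (s x) then b (s x) else 0)
    = a k * card {x \<in> A. s x = k} + (case k of 0 \<Rightarrow> 0 | Suc j \<Rightarrow> b j * card {x \<in> A. s x = j})"
proof -
  have count: "(\<Sum>x\<in>A. if P x then c else 0) = c * card {x \<in> A. P x}" for P and c :: nat
    using assms by (simp add: sum.inter_filter[symmetric])
  show ?thesis
  proof (cases k)
    case 0
    have "(\<Sum>x\<in>A. if k = s x then a (s x) else if k = Suc (s x) then b (s x) else 0)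
        = (\<Sum>x\<in>A. if s x = k then a k else 0)"
      using 0 by (intro sum.cong) auto
    then show ?thesis
      using 0 by (simp add: count)
  next
    case (Suc j)
    have "(\<Sum>x\<in>A. if k = s x then a (s x) else if k = Suc (s x) then b (s x) else 0)
        = (\<Sum>x\<in>A. (if s x = k then a k else 0) + (if s x = j then b j else 0))"
      using Suc by (intro sum.cong) auto
    then show ?thesis
      using Suc by (simp add: sum.distrib count)
  qed
qed

lemma card_ins_at_max_des:
  assumes "\<forall>x\<in>set xs. x < M" "\<not> has_double_descent xs"
  shows "card {g. g \<le> length xs \<and> \<not> has_double_descent (ins_at g M xs) \<and> des (ins_at g M xs) = k}
    = (if k = des xs then des xs + 1 else if k = Suc (des xs) then length xs - 2 * des xs else 0)"
proof -
  let ?n = "length xs" and ?D = "descents xs"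
  define F where "F = {..?n} - ?D"
  define C where "C = {..<?n} - (?D \<union> Suc ` ?D)"
  have "{g. g \<le> ?n \<and> \<not> has_double_descent (ins_at g M xs) \<and> des (ins_at g M xs) = k}
      = {g \<in> F. des (ins_at g M xs) = k}"
    using has_double_descent_ins_at_max[OF assms] by (auto simp: F_def)
  also have "card \<dots> = (if k = des xs then card F - card C else if k = Suc (des xs) then card C else 0)"
  proof (rule card_level_set_plus_indicator)
    show "finite F" "C \<subseteq> F"
      by (auto simp: F_def C_def)
    fix g assume "g \<in> F"
    moreover have "\<forall>h\<in>Suc ` ?D. h < ?n" "?n \<notin> Suc ` ?D"
      using Suc_descents_subset[of xs] by auto
    ultimately show "des (ins_at g M xs) = des xs + (if g \<in> C then 1 else 0)"
      using des_ins_at_max[OF assms(1), of g] by (auto simp: F_def C_def)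
  qed
  also have "card F = Suc ?n - des xs"
    using descents_subset[of xs] unfolding F_def des_eq_card_descents
    by (subst card_Diff_subset) auto
  also have "card C = ?n - 2 * des xs"
    using descents_subset[of xs] Suc_descents_subset[of xs]
    by (simp add: C_def card_Diff_subset card_descents_Un_Suc_descents[OF assms(2)])
  finally show ?thesis
    using two_des_le_length[OF assms(2)] by auto
qed

lemma card_ins_at_max_ipk:
  assumes "\<forall>x\<in>set xs. x < M" "xs \<noteq> []"
  shows "card {g. g \<le> length xs \<and> ipk (ins_at g M xs) = k}
    = (if k = ipk xs then 2 * ipk xs + 2 else if k = Suc (ipk xs) then length xs - 1 - 2 * ipk xs else 0)"
proof -
  let ?n = "length xs" and ?P = "peaks xs"
  define C where "C = {1..<?n} - (?P \<union> Suc ` ?P)"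
  have "card {g \<in> {..?n}. ipk (ins_at g M xs) = k}
      = (if k = ipk xs then card {..?n} - card C else if k = Suc (ipk xs) then card C else 0)"
  proof (rule card_level_set_plus_indicator)
    show "finite {..?n}" "C \<subseteq> {..?n}"
      by (auto simp: C_def)
    fix g assume "g \<in> {..?n}"
    moreover have "\<forall>h\<in>?P \<union> Suc ` ?P. 0 < h \<and> h < ?n"
      and "0 \<notin> ?P \<union> Suc ` ?P" "?n \<notin> ?P \<union> Suc ` ?P"
      using peaks_subset[of xs] Suc_peaks_subset[of xs] by auto
    ultimately show "ipk (ins_at g M xs) = ipk xs + (if g \<in> C then 1 else 0)"
      using ipk_ins_at_max[OF assms(1), of g] by (cases "g = 0") (auto simp: C_def)
  qed
  moreover have "card (?P \<union> Suc ` ?P) \<le> card {1..<?n}"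
    using peaks_subset Suc_peaks_subset by (intro card_mono) auto
  moreover have "card C = ?n - 1 - 2 * ipk xs"
    using peaks_subset[of xs] Suc_peaks_subset[of xs]
    by (simp add: C_def card_Diff_subset card_peaks_Un_Suc_peaks)
  ultimately show ?thesis
    using assms(2) card_peaks_Un_Suc_peaks[of xs] by (cases xs) auto
qed

lemma length_perms: "xs \<in> perms n \<Longrightarrow> length xs = n"
  unfolding perms_def using distinct_card by fastforce

lemma perms_bounded: "xs \<in> perms n \<Longrightarrow> \<forall>x\<in>set xs. 0 < x \<and> x \<le> n"
  by (auto simp: perms_def)

lemma finite_perms: "finite (perms n)"
proof (rule finite_subset)
  show "perms n \<subseteq> {xs. set xs \<subseteq> {1..n} \<and> length xs = n}"
    using length_perms by (auto simp: perms_def)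
qed (rule finite_lists_length_eq, simp)

lemma finite_RS: "finite (RS n)"
  using finite_perms by (simp add: RS_def)

lemma perms_0: "perms 0 = {[]}"
  by (auto simp: perms_def)

lemma perms_1: "perms (Suc 0) = {[1]}"
proof (intro set_eqI iffI)
  fix xs assume "xs \<in> perms (Suc 0)"
  then have "length xs = 1" "set xs = {1}"
    by (auto simp: perms_def length_perms)
  then show "xs \<in> {[1]}"
    by (cases xs) auto
qed (simp add: perms_def)

lemma card_perms_Suc:
  "card {xs \<in> perms (Suc n). P xs} = (\<Sum>ys\<in>perms n. card {g. g \<le> n \<and> P (ins_at g (Suc n) ys)})"
proof -
  let ?f = "\<lambda>(ys, g). ins_at g (Suc n) ys"
  let ?A = "SIGMA ys:perms n. {g. g \<le> n \<and> P (ins_at g (Suc n) ys)}"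
  have "inj_on ?f ?A"
  proof (rule inj_onI, clarify)
    fix ys g ys' g'
    assume ys: "ys \<in> perms n" "g \<le> n" and ys': "ys' \<in> perms n" "g' \<le> n"
      and eq: "ins_at g (Suc n) ys = ins_at g' (Suc n) ys'"
    have "Suc n \<notin> set (take g ys)" "Suc n \<notin> set (drop g ys)"
      using ys(1) by (auto simp: perms_def dest: in_set_takeD in_set_dropD)
    then have take: "take g ys = take g' ys'" and "drop g ys = drop g' ys'"
      using eq unfolding ins_at_def by (simp_all add: append_Cons_eq_iff)
    then have "ys = ys'"
      by (metis append_take_drop_id)
    moreover have "g = length (take g ys)" "g' = length (take g' ys')"
      using ys ys' length_perms by auto
    then have "g = g'"
      by (simp only: take)
    ultimately show "ys = ys' \<and> g = g'" ..
  qed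
  moreover have "?f ` ?A = {xs \<in> perms (Suc n). P xs}"
  proof (intro set_eqI iffI)
    fix xs assume "xs \<in> ?f ` ?A"
    then obtain ys g where "ys \<in> perms n" "P (ins_at g (Suc n) ys)" "xs = ins_at g (Suc n) ys"
      by auto
    moreover have "insert (Suc n) {1..n} = {1..Suc n}"
      by auto
    ultimately show "xs \<in> {xs \<in> perms (Suc n). P xs}"
      by (simp add: perms_def distinct_ins_at)
  next
    fix xs assume xs: "xs \<in> {xs \<in> perms (Suc n). P xs}"
    then have "Suc n \<in> set xs"
      by (simp add: perms_def)
    then obtain l r where lr: "xs = l @ Suc n # r"
      by (meson split_list)
    have "set (l @ r) = set xs - {Suc n}"
      using xs lr by (auto simp: perms_def)
    also have "\<dots> = {1..Suc n} - {Suc n}"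
      using xs by (simp add: perms_def)
    also have "\<dots> = {1..n}"
      by auto
    finally have "l @ r \<in> perms n"
      using xs lr by (simp add: perms_def)
    moreover from this have "length l \<le> n"
      using length_perms by fastforce
    ultimately show "xs \<in> ?f ` ?A"
      using xs lr by (auto intro!: image_eqI[of _ _ "(l @ r, length l)"])
  qed
  ultimately have "card {xs \<in> perms (Suc n). P xs} = card ?A"
    using card_image by fastforce
  also have "\<dots> = (\<Sum>ys\<in>perms n. card {g. g \<le> n \<and> P (ins_at g (Suc n) ys)})"
    by (rule card_SigmaI) (simp_all add: finite_perms)
  finally show ?thesis .
qed

lemma simsun_ins_at_max:
  assumes "\<forall>x\<in>set xs. x \<le> length xs"
  shows "simsun (ins_at g (Suc (length xs)) xs)
    \<longleftrightarrow> simsun xs \<and> \<not> has_double_descent (ins_at g (Suc (length xs)) xs)"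
proof -
  let ?M = "Suc (length xs)"
  have "filter (\<lambda>x. x \<le> ?M) (ins_at g ?M xs) = ins_at g ?M xs"
    by (rule filter_True) (use assms in auto)
  moreover have "{1..length (ins_at g ?M xs)} = insert ?M {1..length xs}"
    by auto
  ultimately show ?thesis
    unfolding simsun_def by (auto simp: filter_ins_at)
qed

lemma simsun_imp_no_double_descent:
  assumes "\<forall>x\<in>set xs. x \<le> length xs" "simsun xs"
  shows "\<not> has_double_descent xs"
proof (cases "xs = []")
  case False
  then have "length xs \<in> {1..length xs}"
    by (cases xs) auto
  then have "\<not> has_double_descent (filter (\<lambda>x. x \<le> length xs) xs)"
    using assms(2) unfolding simsun_def by blast
  then show ?thesis
    using assms(1) by (simp add: filter_True)
qed (simp add: has_double_descent_short)

lemma card_simsun_ins_at_max: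
  assumes "ys \<in> perms n"
  shows "card {g. g \<le> n \<and> simsun (ins_at g (Suc n) ys) \<and> des (ins_at g (Suc n) ys) = k}
    = (if simsun ys then (if k = des ys then des ys + 1
                          else if k = Suc (des ys) then n - 2 * des ys else 0)
       else 0)"
proof -
  let ?v = "\<lambda>g. ins_at g (Suc n) ys"
  have bounded: "\<forall>x\<in>set ys. x \<le> length ys" and n: "length ys = n"
    using assms perms_bounded length_perms by auto
  have "{g. g \<le> n \<and> simsun (?v g) \<and> des (?v g) = k}
      = (if simsun ys then {g. g \<le> n \<and> \<not> has_double_descent (?v g) \<and> des (?v g) = k} else {})"
    using simsun_ins_at_max[OF bounded] n by auto
  moreover have "\<forall>x\<in>set ys. x < Suc n"
    using bounded n by auto
  ultimately show ?thesis
    using card_ins_at_max_des[of ys "Suc n" k] simsun_imp_no_double_descent[OF bounded] n by auto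
qed

lemma S_Suc: "S (Suc n) k = (k + 1) * S n k + (case k of 0 \<Rightarrow> 0 | Suc j \<Rightarrow> (n - 2 * j) * S n j)"
proof -
  let ?count = "\<lambda>d. if k = d then d + 1 else if k = Suc d then n - 2 * d else 0"
  have "S (Suc n) k = card {xs \<in> perms (Suc n). simsun xs \<and> des xs = k}"
    by (simp add: S_def RS_def conj_assoc)
  also have "\<dots> = (\<Sum>ys\<in>perms n. if simsun ys then ?count (des ys) else 0)"
    by (simp add: card_perms_Suc card_simsun_ins_at_max)
  also have "\<dots> = (\<Sum>ys\<in>RS n. ?count (des ys))"
    using finite_perms by (simp add: RS_def sum.inter_filter)
  also have "\<dots> = (k + 1) * S n k + (case k of 0 \<Rightarrow> 0 | Suc j \<Rightarrow> (n - 2 * j) * S n j)"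
    using sum_by_level_and_predecessor[OF finite_RS, of k des "\<lambda>d. d + 1" "\<lambda>d. n - 2 * d" n]
    by (simp add: S_def split: nat.split)
  finally show ?thesis .
qed

lemma W_Suc:
  assumes "1 \<le> n"
  shows "W (Suc n) k = (2 * k + 2) * W n k + (case k of 0 \<Rightarrow> 0 | Suc j \<Rightarrow> (n - 1 - 2 * j) * W n j)"
proof -
  let ?count = "\<lambda>p. if k = p then 2 * p + 2 else if k = Suc p then n - 1 - 2 * p else 0"
  have "W (Suc n) k = (\<Sum>ys\<in>perms n. card {g. g \<le> n \<and> ipk (ins_at g (Suc n) ys) = k})"
    unfolding W_def by (rule card_perms_Suc)
  also have "\<dots> = (\<Sum>ys\<in>perms n. ?count (ipk ys))"
  proof (rule sum.cong)
    fix ys assume ys: "ys \<in> perms n"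
    then have "length ys = n" "ys \<noteq> []" "\<forall>x\<in>set ys. x < Suc n"
      using perms_bounded length_perms assms by fastforce+
    then show "card {g. g \<le> n \<and> ipk (ins_at g (Suc n) ys) = k} = ?count (ipk ys)"
      using card_ins_at_max_ipk[of ys "Suc n" k] by simp
  qed simp
  also have "\<dots> = (2 * k + 2) * W n k + (case k of 0 \<Rightarrow> 0 | Suc j \<Rightarrow> (n - 1 - 2 * j) * W n j)"
    using sum_by_level_and_predecessor[OF finite_perms, of k ipk "\<lambda>p. 2 * p + 2" "\<lambda>p. n - 1 - 2 * p" n]
    by (simp add: W_def split: nat.split)
  finally show ?thesis .
qed

lemma S_0: "S 0 k = (if k = 0 then 1 else 0)"
proof -
  have "simsun []"
    by (simp add: simsun_def)
  then have "{xs \<in> RS 0. des xs = k} = (if k = 0 then {[]} else {})"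
    by (auto simp: RS_def perms_0)
  then show ?thesis
    by (simp add: S_def)
qed

lemma W_1: "W (Suc 0) k = (if k = 0 then 1 else 0)"
proof -
  have "{xs \<in> perms (Suc 0). ipk xs = k} = (if k = 0 then {[1]} else {})"
    by (auto simp: perms_1 ipk_short)
  then show ?thesis
    by (simp add: W_def)
qed

lemma two_pow_mult_W_Suc: "2 ^ k * W (Suc n) k = 2 ^ n * S n k"
proof (induction n arbitrary: k)
  case 0
  then show ?case by (simp add: W_1 S_0)
next
  case (Suc n)
  show ?case
  proof (cases k)
    case 0
    then show ?thesis
      using Suc.IH[of 0] by (simp add: W_Suc S_Suc)
  next
    case (Suc j)
    define c where "c = n - 2 * j"
    have "2 ^ k * W (Suc (Suc n)) k = 2 ^ k * ((2 * k + 2) * W (Suc n) k + c * W (Suc n) j)"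
      using Suc by (simp add: W_Suc c_def)
    also have "\<dots> = 2 * (k + 1) * (2 ^ k * W (Suc n) k) + 2 * c * (2 ^ j * W (Suc n) j)"
      using Suc by (simp add: algebra_simps)
    also have "\<dots> = 2 * (k + 1) * (2 ^ n * S n k) + 2 * c * (2 ^ n * S n j)"
      by (simp only: Suc.IH)
    also have "\<dots> = 2 ^ Suc n * ((k + 1) * S n k + c * S n j)"
      by (simp add: algebra_simps)
    also have "\<dots> = 2 ^ Suc n * S (Suc n) k"
      using Suc by (simp add: S_Suc c_def)
    finally show ?thesis .
  qed
qed

lemma W_Suc_eq_S:
  assumes "k \<le> n"
  shows "W (Suc n) k = 2 ^ (n - k) * S n k"
proof -
  have "2 ^ k * W (Suc n) k = 2 ^ k * (2 ^ (n - k) * S n k)"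
    using two_pow_mult_W_Suc[of k n] assms by (simp add: power_add[symmetric])
  then show ?thesis by simp
qed

section \<open>Generating polynomials\<close>

lemma S_eq_0:
  assumes "n < 2 * k"
  shows "S n k = 0"
proof -
  have "2 * des xs \<le> n" if "xs \<in> RS n" for xs
    using that two_des_le_length simsun_imp_no_double_descent perms_bounded length_perms
    unfolding RS_def by fastforce
  then have "{xs \<in> RS n. des xs = k} = {}"
    using assms by fastforce
  then show ?thesis
    unfolding S_def by (simp only: card.empty)
qed

definition S_pol :: "nat \<Rightarrow> real poly" where
  "S_pol n = (\<Sum>k\<le>n. monom (real (S n k)) k)"

lemma coeff_S_pol: "coeff (S_pol n) k = real (S n k)"
  using S_eq_0[of n k] by (auto simp: S_pol_def coeff_sum coeff_monom)

lemma poly_S_pol: "poly (S_pol n) x = S_poly n x"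
  by (simp add: S_pol_def S_poly_def poly_sum poly_monom)

lemma S_Suc_Suc_real:
  "real (S (Suc n) (Suc i)) = (real i + 2) * real (S n (Suc i)) + (real n - 2 * real i) * real (S n i)"
proof -
  have "real (S (Suc n) (Suc i)) = real (i + 2) * real (S n (Suc i)) + real (n - 2 * i) * real (S n i)"
    by (simp only: S_Suc nat.case of_nat_add of_nat_mult) simp
  moreover have "real (n - 2 * i) * real (S n i) = (real n - 2 * real i) * real (S n i)"
    using S_eq_0[of n i] by (cases "2 * i \<le> n") (simp_all add: of_nat_diff)
  ultimately show ?thesis by simp
qed

lemma S_pol_Suc: "S_pol (Suc n) = [:1, real n:] * S_pol n + [:0, 1, -2:] * pderiv (S_pol n)"
proof (rule poly_eqI)
  fix k
  have "[:1, real n:] * p = p + pCons 0 (smult (real n) p)"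
    and "[:0, 1, -2:] * p = pCons 0 (p + pCons 0 (smult (-2) p))" for p :: "real poly"
    by (simp_all add: mult_pCons_left)
  then show "coeff (S_pol (Suc n)) k
      = coeff ([:1, real n:] * S_pol n + [:0, 1, -2:] * pderiv (S_pol n)) k"
    using S_Suc[of n 0]
    by (cases k) (auto simp: coeff_S_pol S_Suc_Suc_real coeff_pderiv coeff_pCons algebra_simps
        split: nat.split)
qed

lemma pcompose_power: "pcompose (p ^ n) q = pcompose p q ^ n"
  by (induction n) (simp_all add: pcompose_mult pcompose_1)

text \<open>
  fubini_pol m is (-2)^m F_m(-x/2) for the Fubini polynomial F_m(t) = sum_i i! S(m,i) t^i,
  S(m,i) the Stirling numbers of the second kind.
\<close>

definition fubini_pol :: "nat \<Rightarrow> real poly" where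
  "fubini_pol m = (\<Sum>i\<le>m. monom (fact i * real (Stirling m i) * (-2) ^ (m - i)) i)"

lemma coeff_fubini_pol: "coeff (fubini_pol m) i = fact i * real (Stirling m i) * (-2) ^ (m - i)"
  by (auto simp: fubini_pol_def coeff_sum coeff_monom)

lemma coeff_fubini_pol_Suc_Suc:
  "coeff (fubini_pol (Suc m)) (Suc i)
    = real (Suc i) * coeff (fubini_pol m) i - 2 * real (Suc i) * coeff (fubini_pol m) (Suc i)"
proof (cases "i < m")
  case True
  then have "(-2 :: real) ^ (m - i) = -2 * (-2) ^ (m - Suc i)"
    by (metis Suc_diff_Suc power_Suc)
  then show ?thesis
    by (simp add: coeff_fubini_pol algebra_simps)
next
  case False
  then show ?thesis
    by (simp add: coeff_fubini_pol algebra_simps)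
qed

lemma fubini_pol_Suc:
  "fubini_pol (Suc m) = [:0, 1:] * fubini_pol m + [:0, -2, 1:] * pderiv (fubini_pol m)"
proof (rule poly_eqI)
  fix j
  have "[:0, 1:] * p = pCons 0 p" and "[:0, -2, 1:] * p = pCons 0 (smult (-2) p + pCons 0 p)"
    for p :: "real poly"
    by (simp_all add: mult_pCons_left)
  then show "coeff (fubini_pol (Suc m)) j
      = coeff ([:0, 1:] * fubini_pol m + [:0, -2, 1:] * pderiv (fubini_pol m)) j"
  proof (cases j)
    case 0
    then show ?thesis by (simp add: coeff_fubini_pol)
  next
    case (Suc i)
    then show ?thesis
      by (cases i) (simp_all add: coeff_fubini_pol_Suc_Suc coeff_pderiv algebra_simps)
  qed
qed

lemma coeff_x_plus_1_power: "coeff ([:1, 1:] ^ i) j = real (i choose j)"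
proof (cases "j \<le> i")
  case False
  then show ?thesis
    by (simp add: coeff_eq_0 degree_power_eq)
qed (simp add: coeff_linear_poly_power)

lemma ibinom_of_nat [simp]: "ibinom i (int j) = int (i choose j)"
  by (simp add: ibinom_def)

lemma ibinom_of_nat_minus_1: "ibinom i (int j - 1) = (if j = 0 then 0 else int (i choose (j - 1)))"
  by (cases j) (simp_all add: ibinom_def)

definition H_pol :: "nat \<Rightarrow> real poly" where
  "H_pol m = [:-1, 1:] * pcompose (fubini_pol m) [:1, 1:]"

lemma coeff_H_pol:
  "coeff (H_pol m) j
    = (\<Sum>i\<le>m. coeff (fubini_pol m) i * real_of_int (ibinom i (int j - 1) - ibinom i (int j)))"
proof -
  let ?F = "pcompose (fubini_pol m) [:1, 1:]"
  have "pcompose (monom c i) [:1, 1:] = smult c ([:1, 1:] ^ i)" for c :: real and i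
    by (simp add: monom_altdef pcompose_smult pcompose_power pcompose_pCons)
  then have F: "coeff ?F j = (\<Sum>i\<le>m. coeff (fubini_pol m) i * real (i choose j))" for j
    by (simp add: fubini_pol_def pcompose_sum coeff_sum coeff_x_plus_1_power coeff_fubini_pol)
  have "coeff (H_pol m) j = (if j = 0 then 0 else coeff ?F (j - 1)) - coeff ?F j"
    by (cases j) (simp_all add: H_pol_def mult_pCons_left)
  then show ?thesis
    unfolding F ibinom_of_nat_minus_1 ibinom_of_nat
    by (cases j) (simp_all add: sum_subtractf sum_negf right_diff_distrib)
qed

lemma H_pol_Suc: "H_pol (Suc m) = [:-1, 0, 1:] * pderiv (H_pol m)"
proof -
  let ?F = "pcompose (fubini_pol m) [:1, 1:]"
  have "pcompose [:0, 1:] [:1, 1:] = [:1, 1::real:]"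
    and "pcompose [:0, -2, 1:] [:1, 1:] = [:-1, 0, 1::real:]"
    and "pcompose (pderiv (fubini_pol m)) [:1, 1:] = pderiv ?F"
    by (simp_all add: pcompose_pCons pderiv_pcompose pderiv_pCons)
  then have Suc: "pcompose (fubini_pol (Suc m)) [:1, 1:] = [:1, 1:] * ?F + [:-1, 0, 1:] * pderiv ?F"
    unfolding fubini_pol_Suc pcompose_add pcompose_mult by (simp only:)
  have "pderiv [:-1, 1::real:] = 1" and x2_minus_1: "[:-1, 1:] * [:1, 1:] = [:-1, 0, 1::real:]"
    by (simp_all add: pderiv_pCons)
  then have "pderiv (H_pol m) = [:-1, 1:] * pderiv ?F + ?F"
    unfolding H_pol_def pderiv_mult by (simp only: mult_1_left add.commute)
  then show ?thesis
    unfolding H_pol_def Suc x2_minus_1[symmetric] by (simp only: algebra_simps)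
qed

lemma degree_H_pol: "degree (H_pol m) \<le> Suc m"
proof (rule degree_le, intro allI impI)
  fix j assume "Suc m < j"
  then show "coeff (H_pol m) j = 0"
    unfolding coeff_H_pol ibinom_of_nat_minus_1 by (intro sum.neutral) (auto simp: binomial_eq_0)
qed

definition parity_reverse :: "nat \<Rightarrow> 'a::comm_ring_1 poly \<Rightarrow> 'a poly" where
  "parity_reverse N p = (\<Sum>k\<le>N div 2. monom ((-1) ^ k * coeff p (N - 2 * k)) k)"

lemma coeff_parity_reverse:
  "coeff (parity_reverse N p) k = (if 2 * k \<le> N then (-1) ^ k * coeff p (N - 2 * k) else 0)"
proof -
  have "k \<le> N div 2 \<longleftrightarrow> 2 * k \<le> N"
    by linarith
  then show ?thesis
    by (simp add: parity_reverse_def coeff_sum coeff_monom)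
qed

lemma poly_parity_reverse:
  "poly (parity_reverse N p) y = (\<Sum>k\<le>N div 2. coeff (parity_reverse N p) k * y ^ k)"
proof -
  have "(\<Sum>k\<le>N div 2. coeff (parity_reverse N p) k * y ^ k)
      = (\<Sum>k\<le>N div 2. (-1) ^ k * coeff p (N - 2 * k) * y ^ k)"
    by (intro sum.cong) (auto simp: coeff_parity_reverse)
  then show ?thesis
    by (simp add: parity_reverse_def poly_sum poly_monom)
qed

lemma parity_reverse_Suc:
  fixes p :: "'a::idom poly"
  assumes "degree p \<le> Suc N"
  shows "parity_reverse (Suc N) ([:-1, 0, 1:] * pderiv p)
    = [:1, 1:] * (smult (of_nat N) (parity_reverse N p) - smult 2 (pCons 0 (pderiv (parity_reverse N p))))"
    (is "?l = ?r")
proof (rule poly_eqI)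
  fix k
  let ?t = "coeff (parity_reverse N p)"
  have r: "coeff ?r k = (of_nat N - 2 * of_nat k) * ?t k
      + (case k of 0 \<Rightarrow> 0 | Suc i \<Rightarrow> (of_nat N - 2 * of_nat i) * ?t i)"
    by (cases k) (simp_all add: mult_pCons_left coeff_pderiv coeff_pCons algebra_simps split: nat.split)
  have l: "coeff ?l k = (if 2 * k \<le> Suc N then (-1) ^ k *
      ((case Suc N - 2 * k of Suc (Suc j) \<Rightarrow> of_nat (Suc j) * coeff p (Suc j) | _ \<Rightarrow> 0)
        - of_nat (Suc (Suc N - 2 * k)) * coeff p (Suc (Suc N - 2 * k))) else 0)"
    by (simp add: coeff_parity_reverse mult_pCons_left coeff_pderiv split: nat.split)
  consider (low) "2 * k + 1 \<le> N" | (mid) "N = 2 * k" | (top) "Suc N = 2 * k" | (high) "Suc N < 2 * k"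
    by linarith
  then show "coeff ?l k = coeff ?r k"
  proof cases
    case low
    then obtain d where low: "N = 2 * k + 1 + d"
      using le_Suc_ex by blast
    have "coeff p (2 * k + 3 + d) = 0" if "k = 0"
      using assms low that by (simp add: coeff_eq_0)
    then show ?thesis
      unfolding l r using low
      by (cases k) (auto simp: coeff_parity_reverse numeral_eq_Suc algebra_simps)
  next
    case mid
    have "coeff p (Suc (Suc N)) = 0"
      using assms by (simp add: coeff_eq_0)
    then show ?thesis
      unfolding l r using mid
      by (cases k) (auto simp: coeff_parity_reverse numeral_eq_Suc algebra_simps)
  next
    case top
    then show ?thesis
      unfolding l r by (cases k) (auto simp: coeff_parity_reverse algebra_simps)
  next
    case high
    then obtain i where k: "k = Suc i"
      by (cases k) auto
    have "of_nat N - 2 * of_nat i = (0::'a)" if "2 * i \<le> N"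
    proof -
      have "N = 2 * i"
        using high that k by linarith
      then show ?thesis by simp
    qed
    then show ?thesis
      unfolding l r using high k by (auto simp: coeff_parity_reverse)
  qed
qed

definition Q_pol :: "nat \<Rightarrow> real poly" where
  "Q_pol n = parity_reverse (n + 2) (H_pol (Suc n))"

lemma Q_pol_0: "Q_pol 0 = [:1, 1:]"
proof -
  have "H_pol 0 = [:-1, 1:]"
    by (simp add: H_pol_def fubini_pol_def pcompose_1)
  then have "H_pol 1 = [:-1, 0, 1:]"
    using H_pol_Suc[of 0] by (simp add: pderiv_pCons)
  then show ?thesis
    by (intro poly_eqI) (auto simp: Q_pol_def coeff_parity_reverse coeff_pCons numeral_eq_Suc split: nat.split)
qed

lemma Q_pol_Suc:
  "Q_pol (Suc n) = [:1, 1:] * (smult (real n + 2) (Q_pol n) - smult 2 (pCons 0 (pderiv (Q_pol n))))"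
proof -
  have "Q_pol (Suc n) = parity_reverse (Suc (n + 2)) ([:-1, 0, 1:] * pderiv (H_pol (Suc n)))"
    by (simp only: Q_pol_def H_pol_Suc add_Suc)
  also have "\<dots> = [:1, 1:] * (smult (of_nat (n + 2)) (Q_pol n) - smult 2 (pCons 0 (pderiv (Q_pol n))))"
    unfolding Q_pol_def by (rule parity_reverse_Suc) (use degree_H_pol[of "Suc n"] in simp)
  finally show ?thesis
    by (simp only: of_nat_add of_nat_numeral)
qed

lemma p_coef_eq_coeff_Q_pol: "real_of_int (p_coef (Suc n) (int k)) = coeff (Q_pol n) k"
proof -
  let ?b = "\<lambda>i j. real_of_int (ibinom i j)"
  have "coeff (fubini_pol (Suc n)) 0 = 0"
    by (simp add: coeff_fubini_pol)
  moreover have "{..Suc n} = insert 0 {1..Suc n}"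
    by auto
  ultimately have p: "real_of_int (p_coef (Suc n) (int k)) = (-1) ^ k *
      (\<Sum>i\<le>Suc n. coeff (fubini_pol (Suc n)) i
        * (?b i (int (Suc n) - 2 * int k) - ?b i (int (Suc n) - 2 * int k + 1)))"
    by (simp add: p_coef_def coeff_fubini_pol of_int_sum algebra_simps)
  show ?thesis
  proof (cases "2 * k \<le> n + 2")
    case True
    then have "int (n + 2 - 2 * k) - 1 = int (Suc n) - 2 * int k"
      and "int (n + 2 - 2 * k) = int (Suc n) - 2 * int k + 1"
      by simp_all
    moreover have "coeff (Q_pol n) k = (-1) ^ k * coeff (H_pol (Suc n)) (n + 2 - 2 * k)"
      using True by (simp add: Q_pol_def coeff_parity_reverse)
    ultimately show ?thesis
      unfolding p coeff_H_pol by (simp only: of_int_diff)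
  next
    case False
    then show ?thesis
      using p by (simp add: Q_pol_def coeff_parity_reverse ibinom_def)
  qed
qed

lemma pcompose_Q_pol_Suc:
  "pcompose (Q_pol (Suc n)) [:-1, 2:]
    = [:0, 2:] * (smult (real n + 2) (pcompose (Q_pol n) [:-1, 2:])
        - [:-1, 2:] * pderiv (pcompose (Q_pol n) [:-1, 2:]))"
proof -
  have "pcompose [:1, 1:] [:-1, 2:] = [:0, 2::real:]"
    by (simp add: pcompose_pCons)
  moreover have "smult 2 (pcompose (pCons 0 (pderiv (Q_pol n))) [:-1, 2:])
      = [:-1, 2:] * pderiv (pcompose (Q_pol n) [:-1, 2:])"
    by (simp add: pcompose_pCons pderiv_pcompose pderiv_pCons mult_smult_right mult.commute)
  ultimately show ?thesis
    unfolding Q_pol_Suc pcompose_mult pcompose_diff pcompose_smult by (simp only:)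
qed

lemma S_pol_eq_Q_pol: "smult (2 ^ Suc n) (pCons 0 (S_pol n)) = pcompose (Q_pol n) [:-1, 2:]"
proof (induction n)
  case 0
  then show ?case
    by (simp add: S_pol_def S_0 Q_pol_0 pcompose_pCons)
next
  case (Suc n)
  let ?c = "(2::real) ^ Suc n" and ?S = "S_pol n"
  have "pderiv (pcompose (Q_pol n) [:-1, 2:]) = smult ?c (?S + pCons 0 (pderiv ?S))"
    by (simp flip: Suc.IH add: pderiv_smult pderiv_pCons smult_add_right)
  then have "pcompose (Q_pol (Suc n)) [:-1, 2:]
      = [:0, 2:] * (smult (real n + 2) (smult ?c (pCons 0 ?S))
          - [:-1, 2:] * smult ?c (?S + pCons 0 (pderiv ?S)))"
    by (simp add: pcompose_Q_pol_Suc flip: Suc.IH)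
  also have "\<dots> = smult (2 * ?c) (pCons 0 ([:1, real n:] * ?S + [:0, 1, -2:] * pderiv ?S))"
    by (rule poly_eqI) (simp add: mult_pCons_left coeff_pCons algebra_simps split: nat.split)
  finally show ?case
    by (simp add: S_pol_Suc)
qed

theorem proposition1:
  shows "(\<forall>n k. 1 \<le> n \<and> k \<le> n div 2 \<longrightarrow> W (n+1) k = 2 ^ (n - k) * S n k)
    \<and> (\<forall>n (x::real). 1 \<le> n \<and> x \<noteq> 0 \<longrightarrow>
         S_poly n x = 1 / (2 ^ (n+1) * x) *
           (\<Sum>k\<le>n div 2 + 1. real_of_int (p_coef (n+1) (int k)) * (2*x - 1) ^ k))"
proof (intro conjI allI impI)
  fix n k :: nat
  assume "1 \<le> n \<and> k \<le> n div 2"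
  then have "k \<le> n"
    using div_le_dividend order.trans by blast
  then show "W (n + 1) k = 2 ^ (n - k) * S n k"
    using W_Suc_eq_S by simp
next
  fix n :: nat and x :: real
  assume "1 \<le> n \<and> x \<noteq> 0"
  have "2 ^ (n + 1) * (x * S_poly n x) = poly (Q_pol n) (2 * x - 1)"
    using arg_cong[OF S_pol_eq_Q_pol[of n], of "\<lambda>p. poly p x"]
    by (simp add: poly_pcompose poly_S_pol algebra_simps)
  also have "\<dots> = (\<Sum>k\<le>n div 2 + 1. real_of_int (p_coef (n + 1) (int k)) * (2 * x - 1) ^ k)"
    by (simp add: Q_pol_def poly_parity_reverse p_coef_eq_coeff_Q_pol)
  finally show "S_poly n x = 1 / (2 ^ (n + 1) * x) *
      (\<Sum>k\<le>n div 2 + 1. real_of_int (p_coef (n + 1) (int k)) * (2 * x - 1) ^ k)"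
    using \<open>1 \<le> n \<and> x \<noteq> 0\<close> by (simp add: field_simps)
qed

end
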